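(* Let $\|\cdot\|_A$ and $\|\cdot\|_P$ be norms on $\mathbb{R}^n$ such that $\|\cdot\|_A$ is decomposable and $\|\cdot\|_P$ is $\gamma$-decomposable with respect to $\mathcal{G}$ for some $\gamma\in(0,1]$. Let $a,b,c,d$ be the constants defined below, let $f>0$ be a constant such that for every $h\in\mathbb{R}^n$, every $\Lambda_0\in\mathrm{GkS}$ and every optimal group $k$-sparse decomposition $\Lambda_1,\ldots,\Lambda_s$ of $h_{\mathcal{N}\setminus\Lambda_0}$ with respect to $\|\cdot\|_A$ one has $\sum_{j=2}^s\|h_{\Lambda_j}\|_2\le\frac1f\|h_{\mathcal{N}\setminus\Lambda_0}\|_A$, and put $r=b/(a\gamma)$. Let $A\in\mathbb{R}^{m\times n}$ satisfy the group restricted isometry property (GRIP) of order $2k$ with constant $\delta_{2k}\in(0,1)$, and assume the compressibility condition $$\delta_{2k}<\frac{f}{f+\sqrt2\,rd}.$$ Let $x\in\mathbb{R}^n$, $\eta\in\mathbb{R}^m$ with $\|\eta\|_2\le\epsilon$, $y=Ax+\eta$, and let $\hat x$ be a minimizer of $\|z\|_P$ over $z\in\mathbb{R}^n$ subject to $\|y-Az\|_2\le\epsilon$. Then, writing $\sigma=\sigma_{k,\mathcal{G}}(x,\|\cdot\|_A)$, $$\|\hat x-x\|_2\le D_1\sigma+D_2\epsilon,\qquad \|\hat x-x\|_A\le D_3\sigma+D_4\epsilon,$$ where, with $\Delta=1-(1+\sqrt2\,rd/f)\delta_{2k}$, $$D_1=\frac{r(1+\gamma)}{f}\cdot\frac{1+(\sqrt2-1)\delta_{2k}}{\Delta},\qquad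 D_2=2(1+rd/f)\frac{\sqrt{1+\delta_{2k}}}{\Delta},$$ $$D_3=r(1+\gamma)\cdot\frac{1+(\sqrt2\,d/f-1)\delta_{2k}}{\Delta},\qquad D_4=2d(1+r)\frac{\sqrt{1+\delta_{2k}}}{\Delta}.$$
   Context: Fix positive integers $n,k$, $\mathcal{N}=\{1,\ldots,n\}$, and a partition $\mathcal{G}=\{G_1,\ldots,G_g\}$ of $\mathcal{N}$ with $|G_i|\le k$. For $x\in\mathbb{R}^n$, $\Lambda\subseteq\mathcal{N}$: $(x_\Lambda)_i=x_i$ if $i\in\Lambda$, else $0$; $\mathrm{supp}(u)=\{i:u_i\ne0\}$; $G_S=\bigcup_{i\in S}G_i$ for $S\subseteq\{1,\ldots,g\}$. For an integer $t$, $\Lambda$ is group $t$-sparse if $\Lambda=G_S$ for some $S$ and $|\Lambda|\le t$; $\mathrm{GkS}$ is the collection of group $k$-sparse sets. A norm $\|\cdot\|$ is $\gamma$-decomposable w.r.t. $\mathcal{G}$ ($\gamma\in(0,1]$) if $\|u+v\|\ge\|u\|+\gamma\|v\|$ whenever $\mathrm{supp}(u)\subseteq G_{S_u}$, $\mathrm{supp}(v)\subseteq G_{S_v}$ with $S_u\cap S_v=\emptyset$; decomposable means $1$-decomposable (equivalently equality $\|u+v\|=\|u\|+\|v\|$ for such $u,v$). Group $k$-sparsity index: $\sigma_{k,\mathcal{G}}(x,\|\cdot\|)=\min_{\Lambda\in\mathrm{GkS}}\|x-x_\Lambda\|$. Constants (minima/maxima over $\Lambda\in\mathrm{GkS}$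 and $x$ with $x_\Lambda\ne0$): $a=\min\|x_\Lambda\|_P/\|x_\Lambda\|_A$, $b=\max\|x_\Lambda\|_P/\|x_\Lambda\|_A$, $c=\min\|x_\Lambda\|_A/\|x_\Lambda\|_2$, $d=\max\|x_\Lambda\|_A/\|x_\Lambda\|_2$. $A$ satisfies GRIP of order $2k$ with constant $\delta_{2k}\in(0,1)$ if $(1-\delta_{2k})\|z\|_2^2\le\|Az\|_2^2\le(1+\delta_{2k})\|z\|_2^2$ for every $z$ whose support is contained in some group $2k$-sparse set. Optimal group $k$-sparse decomposition of $v=h_{\mathcal{N}\setminus\Lambda_0}$ ($\Lambda_0\in\mathrm{GkS}$) w.r.t. $\|\cdot\|_A$: pairwise disjoint group $k$-sparse sets $\Lambda_1,\ldots,\Lambda_s\subseteq\mathcal{N}\setminus\Lambda_0$ with union $\mathcal{N}\setminus\Lambda_0$, such that for each $i$, with $r_i=v-\sum_{j<i}v_{\Lambda_j}$, $\Lambda_i$ minimizes $\|r_i-(r_i)_\Lambda\|_A$ over group $k$-sparse $\Lambda\subseteq\mathcal{N}\setminus(\Lambda_0\cup\cdots\cup\Lambda_{i-1})$. *)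

theory Defs
  imports "HOL-Analysis.Analysis" "HOL-Library.Disjoint_Sets"
begin

text \<open>Vectors of R^n are modelled as real^'n for a finite index type 'n
 (so N = UNIV :: 'n set); matrices A in R^(m x n) as real^'n^'m.
 The partition G = {G_1,...,G_g} is a set of sets of indices.\<close>

definition is_norm :: "(real^'n \<Rightarrow> real) \<Rightarrow> bool" where
  "is_norm N \<longleftrightarrow> (\<forall>x. 0 \<le> N x) \<and> (\<forall>x. N x = 0 \<longleftrightarrow> x = 0) \<and>
     (\<forall>c x. N (c *\<^sub>R x) = \<bar>c\<bar> * N x) \<and> (\<forall>x y. N (x + y) \<le> N x + N y)"

definition restr :: "real^'n \<Rightarrow> 'n set \<Rightarrow> real^'n" where
  "restr x L = (\<chi> i. if i \<in> L then x $ i else 0)"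

definition supp :: "real^'n \<Rightarrow> 'n set" where
  "supp u = {i. u $ i \<noteq> 0}"

definition group_sparse :: "'n set set \<Rightarrow> nat \<Rightarrow> 'n set \<Rightarrow> bool" where
  "group_sparse G t L \<longleftrightarrow> (\<exists>S\<subseteq>G. L = \<Union>S) \<and> card L \<le> t"

definition gamma_decomposable :: "'n set set \<Rightarrow> real \<Rightarrow> (real^'n \<Rightarrow> real) \<Rightarrow> bool" where
  "gamma_decomposable G \<gamma> N \<longleftrightarrow>
     (\<forall>u v Su Sv. Su \<subseteq> G \<and> Sv \<subseteq> G \<and> Su \<inter> Sv = {} \<and> supp u \<subseteq> \<Union>Su \<and> supp v \<subseteq> \<Union>Sv
        \<longrightarrow> N (u + v) \<ge> N u + \<gamma> * N v)"

definition decomposable :: "'n set set \<Rightarrow> (real^'n \<Rightarrow> real) \<Rightarrow> bool" where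
  "decomposable G N \<longleftrightarrow> gamma_decomposable G 1 N"

definition sparsity_index :: "'n::finite set set \<Rightarrow> nat \<Rightarrow> real^'n \<Rightarrow> (real^'n \<Rightarrow> real) \<Rightarrow> real" where
  "sparsity_index G k x N = Min ((\<lambda>L. N (x - restr x L)) ` {L. group_sparse G k L})"

text \<open>The set of ratios |x_L|_1 / |x_L|_2 over group k-sparse L and x with x_L nonzero;
  the paper's constants a,b,c,d are its minimum/maximum (attained), written as Inf/Sup.\<close>
definition ratios :: "'n set set \<Rightarrow> nat \<Rightarrow> (real^'n \<Rightarrow> real) \<Rightarrow> (real^'n \<Rightarrow> real) \<Rightarrow> real set" where
  "ratios G k N1 N2 = {N1 (restr x L) / N2 (restr x L) | x L. group_sparse G k L \<and> restr x L \<noteq> 0}"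

definition const_a :: "'n set set \<Rightarrow> nat \<Rightarrow> (real^'n \<Rightarrow> real) \<Rightarrow> (real^'n \<Rightarrow> real) \<Rightarrow> real" where
  "const_a G k NA NP = Inf (ratios G k NP NA)"
definition const_b :: "'n set set \<Rightarrow> nat \<Rightarrow> (real^'n \<Rightarrow> real) \<Rightarrow> (real^'n \<Rightarrow> real) \<Rightarrow> real" where
  "const_b G k NA NP = Sup (ratios G k NP NA)"
definition const_c :: "'n set set \<Rightarrow> nat \<Rightarrow> (real^'n \<Rightarrow> real) \<Rightarrow> real" where
  "const_c G k NA = Inf (ratios G k NA norm)"
definition const_d :: "'n set set \<Rightarrow> nat \<Rightarrow> (real^'n \<Rightarrow> real) \<Rightarrow> real" where
  "const_d G k NA = Sup (ratios G k NA norm)"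

definition GRIP :: "'n set set \<Rightarrow> nat \<Rightarrow> real^'n^'m \<Rightarrow> real \<Rightarrow> bool" where
  "GRIP G t A \<delta> \<longleftrightarrow> (\<forall>z. (\<exists>L. group_sparse G t L \<and> supp z \<subseteq> L) \<longrightarrow>
      (1 - \<delta>) * (norm z)\<^sup>2 \<le> (norm (A *v z))\<^sup>2 \<and> (norm (A *v z))\<^sup>2 \<le> (1 + \<delta>) * (norm z)\<^sup>2)"

text \<open>Optimal group k-sparse decomposition Ls = [Lambda_1,...,Lambda_s] of v = h restricted to
 N minus Lambda_0, w.r.t. the norm NA (list index i corresponds to Lambda_(i+1)).\<close>
definition optimal_decomposition ::
  "'n set set \<Rightarrow> nat \<Rightarrow> (real^'n \<Rightarrow> real) \<Rightarrow> real^'n \<Rightarrow> 'n set \<Rightarrow> 'n set list \<Rightarrow> bool" where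
  "optimal_decomposition G k NA h L0 Ls \<longleftrightarrow>
     (let v = restr h (- L0) in
      (\<forall>i<length Ls. group_sparse G k (Ls ! i) \<and> Ls ! i \<subseteq> - L0) \<and>
      (\<forall>i<length Ls. \<forall>j<length Ls. i \<noteq> j \<longrightarrow> Ls ! i \<inter> Ls ! j = {}) \<and>
      \<Union>(set Ls) = - L0 \<and>
      (\<forall>i<length Ls.
         let r = v - (\<Sum>j<i. restr v (Ls ! j)) in
         (\<forall>L. group_sparse G k L \<and> L \<subseteq> - (L0 \<union> (\<Union>j<i. Ls ! j)) \<longrightarrow>
              NA (r - restr r (Ls ! i)) \<le> NA (r - restr r L))))"

end

theory Submission
  imports Defs
begin

text \<open>Put h = xhat - x and let L0 be a group k-sparse set at which the sparsity index sigma of x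
  is attained. Minimality of xhat, together with the decomposability of NA and the
  gamma-decomposability of NP, yields the cone constraint
  NA (h off L0) <= r NA (h on L0) + r (1 + gamma) sigma.
  Split the complement of L0 by an optimal decomposition Lambda_1, Lambda_2, ... and put
  T = L0 + Lambda_1. The GRIP bounds the Euclidean norm of h on T in terms of norm (A h) <= 2 epsilon
  and of the tail sum_(j >= 2) norm (h on Lambda_j), which the hypothesis on f bounds by
  NA (h off L0) / f; these linear inequalities combine into both estimates. Optimal decompositions
  exist because every greedy step can choose a nonempty block.\<close>

section \<open>Restrictions and supports\<close>

lemma restr_nth [simp]: "restr x L $ i = (if i \<in> L then x $ i else 0)"
  by (simp add: restr_def)

lemma restr_add: "restr (x + y) L = restr x L + restr y L"
  by (simp add: vec_eq_iff)

lemma restr_restr [simp]: "restr (restr x A) B = restr x (A \<inter> B)"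
  by (simp add: vec_eq_iff)

lemma restr_compl: "x - restr x L = restr x (- L)"
  by (simp add: vec_eq_iff)

lemma restr_add_restr_compl: "restr x L + restr x (- L) = x"
  by (simp add: vec_eq_iff)

lemma restr_empty [simp]: "restr x {} = 0"
  by (simp add: vec_eq_iff)

lemma restr_Un_disjoint: "A \<inter> B = {} \<Longrightarrow> restr x (A \<union> B) = restr x A + restr x B"
  by (auto simp: vec_eq_iff)

lemma sum_restr_disjoint:
  assumes "finite J" "\<And>i j. i \<in> J \<Longrightarrow> j \<in> J \<Longrightarrow> i \<noteq> j \<Longrightarrow> P i \<inter> P j = {}"
  shows "(\<Sum>j\<in>J. restr x (P j)) = restr x (\<Union>j\<in>J. P j)"
  using assms
proof (induction J rule: finite_induct)
  case (insert a J)
  then have "(\<Union>j\<in>J. P j) \<inter> P a = {}" by blast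
  with insert show ?case by (simp add: restr_Un_disjoint Int_commute)
qed simp

lemma supp_restr: "supp (restr x L) \<subseteq> L"
  by (auto simp: supp_def)

lemma restr_eq_self: "supp x \<subseteq> L \<Longrightarrow> restr x L = x"
  by (auto simp: supp_def vec_eq_iff)

lemma supp_add: "supp (u + v) \<subseteq> supp u \<union> supp v"
  by (auto simp: supp_def)

lemma supp_sum: "supp (\<Sum>j\<in>J. w j) \<subseteq> (\<Union>j\<in>J. supp (w j))"
  by (induction J rule: infinite_finite_induct) (auto simp: supp_def)

lemma supp_scaleR: "supp (c *\<^sub>R u) \<subseteq> supp u"
  by (auto simp: supp_def)

lemma supp_uminus [simp]: "supp (- u) = supp u"
  by (auto simp: supp_def)

lemma inner_disjoint_supp: "A \<inter> B = {} \<Longrightarrow> supp u \<subseteq> A \<Longrightarrow> supp v \<subseteq> B \<Longrightarrow> u \<bullet> v = 0"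
  unfolding inner_vec_def supp_def by (rule sum.neutral) auto

lemma norm_add_disjoint_supp:
  "A \<inter> B = {} \<Longrightarrow> supp u \<subseteq> A \<Longrightarrow> supp v \<subseteq> B \<Longrightarrow> (norm (u + v))\<^sup>2 = (norm u)\<^sup>2 + (norm v)\<^sup>2"
  by (rule norm_add_Pythagorean) (simp add: orthogonal_def inner_disjoint_supp)

lemma norm_restr_le: "norm (restr x L) \<le> norm x"
proof -
  have "(norm x)\<^sup>2 = (norm (restr x L))\<^sup>2 + (norm (restr x (- L)))\<^sup>2"
    using norm_add_disjoint_supp[of L "- L" "restr x L" "restr x (- L)", OF _ supp_restr supp_restr]
    by (simp add: restr_add_restr_compl)
  then show ?thesis
    by (metis abs_norm_cancel abs_le_square_iff le_add_same_cancel1 zero_le_power2)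
qed

section \<open>Norms on real vectors\<close>

lemma is_normD:
  assumes "is_norm N"
  shows "N x \<ge> 0" "N x = 0 \<longleftrightarrow> x = 0" "N (c *\<^sub>R x) = \<bar>c\<bar> * N x" "N (x + y) \<le> N x + N y"
  using assms unfolding is_norm_def by blast+

lemma is_norm_norm: "is_norm norm"
  by (auto simp: is_norm_def norm_triangle_ineq)

lemma is_norm_zero: "is_norm N \<Longrightarrow> N 0 = 0"
  using is_normD(2) by blast

lemma is_norm_minus: "is_norm N \<Longrightarrow> N (- x) = N x"
  using is_normD(3)[of N "- 1" x] by simp

lemma is_norm_diff_le: "is_norm N \<Longrightarrow> N x - N y \<le> N (x + y)"
  using is_normD(4)[of N "x + y" "- y"] is_norm_minus[of N y] by simp

lemma is_norm_le_restr_add_restr_compl: "is_norm N \<Longrightarrow> N x \<le> N (restr x L) + N (restr x (- L))"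
  using is_normD(4)[of N "restr x L" "restr x (- L)"] by (simp add: restr_add_restr_compl)

lemma is_norm_sum_le: "is_norm N \<Longrightarrow> N (\<Sum>j\<in>J. w j) \<le> (\<Sum>j\<in>J. N (w j))"
proof (induction J rule: infinite_finite_induct)
  case (insert a J)
  then show ?case using is_normD(4)[of N "w a" "sum w J"] by simp
qed (auto simp: is_norm_zero)

lemma is_norm_le_norm:
  assumes "is_norm N"
  obtains C where "C > 0" "\<And>x. N x \<le> C * norm x"
proof -
  define C where "C = 1 + (\<Sum>i\<in>UNIV. N (axis i 1))"
  have "C > 0"
    unfolding C_def using is_normD(1)[OF assms] by (simp add: add_pos_nonneg sum_nonneg)
  moreover have "N x \<le> C * norm x" for x
  proof -
    have "x = (\<Sum>i\<in>UNIV. x $ i *\<^sub>R axis i 1)"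
      by (simp add: vec_eq_iff axis_def sum.If_cases if_distrib cong: if_cong)
    then have "N x = N (\<Sum>i\<in>UNIV. x $ i *\<^sub>R axis i 1)"
      by simp
    also have "\<dots> \<le> (\<Sum>i\<in>UNIV. \<bar>x $ i\<bar> * N (axis i 1))"
      using is_norm_sum_le[OF assms, of "\<lambda>i. x $ i *\<^sub>R axis i 1" UNIV]
      by (simp add: is_normD(3)[OF assms])
    also have "\<dots> \<le> (\<Sum>i\<in>UNIV. norm x * N (axis i 1))"
      by (intro sum_mono mult_right_mono) (auto simp: component_le_norm_cart is_normD(1)[OF assms])
    also have "\<dots> \<le> C * norm x"
      by (simp add: C_def sum_distrib_left[symmetric] algebra_simps)
    finally show ?thesis .
  qed
  ultimately show ?thesis using that by blast
qed

lemma norm_le_is_norm: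
  assumes "is_norm N"
  obtains c where "c > 0" "\<And>x. c * norm x \<le> N x"
proof -
  obtain C where "C > 0" and C: "\<And>x. N x \<le> C * norm x"
    using is_norm_le_norm[OF assms] by blast
  have "C-lipschitz_on UNIV N"
  proof (rule lipschitz_onI)
    fix x y :: "real^'a"
    have "N x - N y \<le> N (x - y)" "N y - N x \<le> N (x - y)"
      using is_norm_diff_le[OF assms, of x "y - x"] is_norm_diff_le[OF assms, of y "x - y"]
        is_norm_minus[OF assms, of "x - y"] by simp_all
    then show "dist (N x) (N y) \<le> C * dist x y"
      using C[of "x - y"] by (simp add: dist_real_def dist_norm)
  qed (use \<open>C > 0\<close> in simp)
  then have "continuous_on (sphere 0 1) N"
    by (rule continuous_on_subset[OF lipschitz_on_continuous_on]) simp
  moreover have "axis undefined 1 \<in> sphere (0 :: real^'a) 1"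
    by (simp add: norm_axis_1)
  ultimately obtain x0 where x0: "norm x0 = 1" "\<And>y. norm y = 1 \<Longrightarrow> N x0 \<le> N y"
    using continuous_attains_inf[OF compact_sphere] by (metis empty_iff mem_sphere_0)
  have "N x0 > 0"
    using x0(1) is_normD(1,2)[OF assms, of x0] by force
  moreover have "N x0 * norm y \<le> N y" for y
  proof (cases "y = 0")
    case False
    then have "N x0 \<le> N ((1 / norm y) *\<^sub>R y)"
      using x0(2) by simp
    also have "\<dots> = N y / norm y"
      using is_normD(3)[OF assms] by simp
    finally show ?thesis
      using False by (simp add: field_simps)
  qed (simp add: is_norm_zero[OF assms])
  ultimately show ?thesis
    using that by blast
qed

section \<open>Unions of groups and decomposability\<close>

definition group_union :: "'n set set \<Rightarrow> 'n set \<Rightarrow> bool" where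
  "group_union G L \<longleftrightarrow> (\<exists>S\<subseteq>G. L = \<Union>S)"

lemma group_sparse_imp_group_union: "group_sparse G k L \<Longrightarrow> group_union G L"
  by (auto simp: group_sparse_def group_union_def)

lemma group_union_Un: "group_union G A \<Longrightarrow> group_union G B \<Longrightarrow> group_union G (A \<union> B)"
  unfolding group_union_def by (metis Union_Un_distrib le_sup_iff)

lemma group_union_UN:
  "finite J \<Longrightarrow> (\<And>j. j \<in> J \<Longrightarrow> group_union G (P j)) \<Longrightarrow> group_union G (\<Union>j\<in>J. P j)"
  by (induction J rule: finite_induct) (auto simp: group_union_Un, auto simp: group_union_def)

lemma group_union_Compl:
  assumes part: "partition_on UNIV G" and "group_union G A"
  shows "group_union G (- A)"
proof -
  obtain S where S: "S \<subseteq> G" "A = \<Union>S"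
    using assms(2) by (auto simp: group_union_def)
  have "- A = \<Union>(G - S)"
  proof
    show "- A \<subseteq> \<Union>(G - S)"
      using partition_onD1[OF part] S by blast
    show "\<Union>(G - S) \<subseteq> - A"
    proof
      fix i assume "i \<in> \<Union>(G - S)"
      then obtain g where g: "g \<in> G" "g \<notin> S" "i \<in> g"
        by blast
      have "i \<notin> h" if "h \<in> S" for h
        using disjointD[OF partition_onD2[OF part] g(1), of h] that S(1) g by blast
      then show "i \<in> - A"
        using S(2) by blast
    qed
  qed
  then show ?thesis
    unfolding group_union_def by blast
qed

lemma group_sparse_empty [simp]: "group_sparse G k {}"
  by (auto simp: group_sparse_def)

lemma group_sparse_group: "\<forall>g\<in>G. card g \<le> k \<Longrightarrow> g \<in> G \<Longrightarrow> group_sparse G k g"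
  unfolding group_sparse_def by (intro conjI exI[of _ "{g}"]) auto

lemma group_sparse_Un:
  assumes "group_sparse G k A" "group_sparse G k B"
  shows "group_sparse G (2 * k) (A \<union> B)"
  using assms group_union_Un[OF assms[THEN group_sparse_imp_group_union]] card_Un_le[of A B]
  by (auto simp: group_sparse_def group_union_def)

lemma gamma_decomposableD:
  assumes part: "partition_on UNIV G" and dec: "gamma_decomposable G \<gamma> N"
    and "group_union G L1" "group_union G L2" "L1 \<inter> L2 = {}" "supp u \<subseteq> L1" "supp v \<subseteq> L2"
  shows "N u + \<gamma> * N v \<le> N (u + v)"
proof -
  obtain S1 S2 where S: "S1 \<subseteq> G" "L1 = \<Union>S1" "S2 \<subseteq> G" "L2 = \<Union>S2"
    using assms(3,4) by (auto simp: group_union_def)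
  have "S1 \<inter> S2 = {}"
  proof (rule ccontr)
    assume "S1 \<inter> S2 \<noteq> {}"
    then obtain g where g: "g \<in> S1" "g \<in> S2"
      by blast
    moreover have "g \<noteq> {}"
      using partition_onD3[OF part] S(1) g(1) by blast
    ultimately show False
      using S \<open>L1 \<inter> L2 = {}\<close> by blast
  qed
  with S assms(6,7) show ?thesis
    using dec unfolding gamma_decomposable_def by blast
qed

lemma gamma_decomposable_sum:
  assumes part: "partition_on UNIV G" and dec: "gamma_decomposable G \<gamma> N"
    and "finite J" and U: "group_union G U" "supp u \<subseteq> U"
    and P: "\<And>j. j \<in> J \<Longrightarrow> group_union G (P j)" "\<And>j. j \<in> J \<Longrightarrow> P j \<inter> U = {}"
      "\<And>i j. i \<in> J \<Longrightarrow> j \<in> J \<Longrightarrow> i \<noteq> j \<Longrightarrow> P i \<inter> P j = {}"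
    and w: "\<And>j. j \<in> J \<Longrightarrow> supp (w j) \<subseteq> P j"
  shows "N u + \<gamma> * (\<Sum>j\<in>J. N (w j)) \<le> N (u + (\<Sum>j\<in>J. w j))"
  using \<open>finite J\<close> P w
proof (induction J rule: finite_induct)
  case (insert a J)
  let ?V = "U \<union> (\<Union>j\<in>J. P j)"
  have V: "group_union G ?V"
    using insert by (intro group_union_Un U(1) group_union_UN) auto
  have a: "group_union G (P a)" "supp (w a) \<subseteq> P a"
    using insert.prems(1,4) by auto
  have disj: "?V \<inter> P a = {}"
    using insert.prems(2,3) insert.hyps(2) by fastforce
  have "supp (u + (\<Sum>j\<in>J. w j)) \<subseteq> ?V"
    using supp_add[of u] supp_sum[of w J] U(2) insert.prems(4) by fastforce
  then have "N (u + (\<Sum>j\<in>J. w j)) + \<gamma> * N (w a) \<le> N (u + (\<Sum>j\<in>J. w j) + w a)"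
    by (rule gamma_decomposableD[OF part dec V a(1) disj _ a(2)])
  moreover have "N u + \<gamma> * (\<Sum>j\<in>J. N (w j)) \<le> N (u + (\<Sum>j\<in>J. w j))"
    using insert by auto
  ultimately show ?case
    using insert.hyps by (simp add: algebra_simps)
qed simp

section \<open>Ratio constants\<close>

lemma ratios_nonempty:
  assumes part: "partition_on UNIV G" and gsize: "\<forall>g\<in>G. card g \<le> k"
  shows "ratios G k N1 N2 \<noteq> {}"
proof -
  obtain g i where g: "g \<in> G" "i \<in> g"
    using partition_onD1[OF part] by blast
  then have "restr (\<chi> j. 1) g $ i \<noteq> 0"
    by simp
  then have "restr (\<chi> j. 1) g \<noteq> 0"
    by (metis zero_index)
  then show ?thesis
    using group_sparse_group[OF gsize g(1)] unfolding ratios_def by blast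
qed

lemma ratios_memI: "group_sparse G k L \<Longrightarrow> supp v \<subseteq> L \<Longrightarrow> v \<noteq> 0 \<Longrightarrow> N1 v / N2 v \<in> ratios G k N1 N2"
  unfolding ratios_def using restr_eq_self[of v L] by (intro CollectI exI[of _ v] exI[of _ L]) simp

lemma ratios_subset_Icc:
  assumes "is_norm N1" "is_norm N2"
  obtains m M where "m > 0" "ratios G k N1 N2 \<subseteq> {m..M}"
proof -
  obtain c1 c2 where "c1 > 0" "c2 > 0" and lower: "\<And>x. c1 * norm x \<le> N1 x" "\<And>x. c2 * norm x \<le> N2 x"
    using norm_le_is_norm[OF assms(1)] norm_le_is_norm[OF assms(2)] by metis
  obtain C1 C2 where "C2 > 0" and upper: "\<And>x. N1 x \<le> C1 * norm x" "\<And>x. N2 x \<le> C2 * norm x"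
    using is_norm_le_norm[OF assms(1)] is_norm_le_norm[OF assms(2)] by metis
  have "c1 / C2 \<le> N1 v / N2 v \<and> N1 v / N2 v \<le> C1 / c2" if "v \<noteq> 0" for v
  proof
    have "N2 v > 0"
      using lower(2)[of v] \<open>c2 > 0\<close> that by (metis mult_pos_pos order_less_le_trans zero_less_norm_iff)
    have "c1 / C2 = (c1 * norm v) / (C2 * norm v)"
      using that by simp
    also have "\<dots> \<le> N1 v / N2 v"
      using \<open>c1 > 0\<close> \<open>N2 v > 0\<close> lower(1) upper(2) by (intro frac_le) (auto intro: order_trans[OF _ lower(1)])
    finally show "c1 / C2 \<le> N1 v / N2 v" .
    have "N1 v / N2 v \<le> (C1 * norm v) / (c2 * norm v)"
      using \<open>c2 > 0\<close> that lower(2) upper(1) order_trans[OF is_normD(1)[OF assms(1)] upper(1)]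
      by (intro frac_le) auto
    also have "\<dots> = C1 / c2"
      using that by simp
    finally show "N1 v / N2 v \<le> C1 / c2" .
  qed
  then have "ratios G k N1 N2 \<subseteq> {c1 / C2..C1 / c2}"
    unfolding ratios_def by auto
  with \<open>c1 > 0\<close> \<open>C2 > 0\<close> show ?thesis
    by (intro that[of "c1 / C2" "C1 / c2"]) auto
qed

context
  fixes G :: "'n::finite set set" and k :: nat and N1 N2 :: "real^'n \<Rightarrow> real"
  assumes part: "partition_on UNIV G" and gsize: "\<forall>g\<in>G. card g \<le> k"
    and N1: "is_norm N1" and N2: "is_norm N2"
begin

lemma ratios_bounds:
  obtains m where "m > 0" "\<And>t. t \<in> ratios G k N1 N2 \<Longrightarrow> m \<le> t"
    and "bdd_below (ratios G k N1 N2)" "bdd_above (ratios G k N1 N2)" "ratios G k N1 N2 \<noteq> {}"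
proof -
  obtain m M where "m > 0" "ratios G k N1 N2 \<subseteq> {m..M}"
    using ratios_subset_Icc[OF N1 N2] by blast
  then show ?thesis
    using that ratios_nonempty[OF part gsize] bdd_below_mono bdd_above_mono by fastforce
qed

lemma Inf_ratios_pos: "0 < Inf (ratios G k N1 N2)"
proof -
  obtain m where "m > 0" "\<And>t. t \<in> ratios G k N1 N2 \<Longrightarrow> m \<le> t" "ratios G k N1 N2 \<noteq> {}"
    using ratios_bounds by blast
  then show ?thesis
    using cInf_greatest[of "ratios G k N1 N2" m] by force
qed

lemma Sup_ratios_pos: "0 < Sup (ratios G k N1 N2)"
proof -
  obtain m t where "m > 0" "m \<le> t" "t \<in> ratios G k N1 N2" "bdd_above (ratios G k N1 N2)"
    using ratios_bounds by (metis ex_in_conv)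
  then show ?thesis
    using cSup_upper[of t "ratios G k N1 N2"] by linarith
qed

lemma Inf_ratios_le:
  assumes "group_sparse G k L" "supp v \<subseteq> L"
  shows "Inf (ratios G k N1 N2) * N2 v \<le> N1 v"
proof (cases "v = 0")
  case False
  have "Inf (ratios G k N1 N2) \<le> N1 v / N2 v"
    using ratios_memI[OF assms False] ratios_bounds by (metis cInf_lower)
  moreover have "N2 v > 0"
    using is_normD(1,2)[OF N2, of v] False by linarith
  ultimately show ?thesis
    by (simp add: le_divide_eq)
qed (simp add: is_norm_zero[OF N1] is_norm_zero[OF N2])

lemma le_Sup_ratios:
  assumes "group_sparse G k L" "supp v \<subseteq> L"
  shows "N1 v \<le> Sup (ratios G k N1 N2) * N2 v"
proof (cases "v = 0")
  case False
  have "N1 v / N2 v \<le> Sup (ratios G k N1 N2)"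
    using ratios_memI[OF assms False] ratios_bounds by (metis cSup_upper)
  moreover have "N2 v > 0"
    using is_normD(1,2)[OF N2, of v] False by linarith
  ultimately show ?thesis
    by (simp add: divide_le_eq)
qed (simp add: is_norm_zero[OF N1] is_norm_zero[OF N2])

end

section \<open>Existence of optimal decompositions\<close>

definition optimal_partial_decomposition ::
  "'n set set \<Rightarrow> nat \<Rightarrow> (real^'n \<Rightarrow> real) \<Rightarrow> real^'n \<Rightarrow> 'n set \<Rightarrow> 'n set list \<Rightarrow> bool" where
  "optimal_partial_decomposition G k NA h L0 Ls \<longleftrightarrow>
     (let v = restr h (- L0) in
      (\<forall>i<length Ls. group_sparse G k (Ls ! i) \<and> Ls ! i \<subseteq> - L0) \<and>
      (\<forall>i<length Ls. \<forall>j<length Ls. i \<noteq> j \<longrightarrow> Ls ! i \<inter> Ls ! j = {}) \<and>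
      (\<forall>i<length Ls.
         let r = v - (\<Sum>j<i. restr v (Ls ! j)) in
         (\<forall>L. group_sparse G k L \<and> L \<subseteq> - (L0 \<union> (\<Union>j<i. Ls ! j)) \<longrightarrow>
              NA (r - restr r (Ls ! i)) \<le> NA (r - restr r L))))"

lemma optimal_decomposition_iff:
  "optimal_decomposition G k NA h L0 Ls \<longleftrightarrow>
     optimal_partial_decomposition G k NA h L0 Ls \<and> \<Union>(set Ls) = - L0"
  unfolding optimal_decomposition_def optimal_partial_decomposition_def Let_def by blast

lemma optimal_partial_decomposition_sparse:
  "optimal_partial_decomposition G k NA h L0 Ls \<Longrightarrow> L \<in> set Ls \<Longrightarrow> group_sparse G k L \<and> L \<subseteq> - L0"
  unfolding optimal_partial_decomposition_def Let_def by (metis in_set_conv_nth)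

lemma optimal_partial_decomposition_Nil: "optimal_partial_decomposition G k NA h L0 []"
  by (simp add: optimal_partial_decomposition_def)

lemma UN_lessThan_nth: "(\<Union>j<length Ps. Ps ! j) = \<Union>(set Ps)"
  by (auto simp: set_conv_nth)

lemma optimal_partial_decomposition_snoc:
  assumes Ps: "optimal_partial_decomposition G k NA h L0 Ps"
    and \<Lambda>: "group_sparse G k \<Lambda>" "\<Lambda> \<subseteq> - (L0 \<union> \<Union>(set Ps))"
    and r: "r = restr h (- L0) - (\<Sum>j<length Ps. restr (restr h (- L0)) (Ps ! j))"
    and best: "\<And>L. group_sparse G k L \<Longrightarrow> L \<subseteq> - (L0 \<union> \<Union>(set Ps)) \<Longrightarrow>
                  NA (r - restr r \<Lambda>) \<le> NA (r - restr r L)"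
  shows "optimal_partial_decomposition G k NA h L0 (Ps @ [\<Lambda>])"
proof -
  let ?n = "length Ps" and ?Qs = "Ps @ [\<Lambda>]" and ?v = "restr h (- L0)"
  have prefix: "(\<Sum>j<i. restr ?v (?Qs ! j)) = (\<Sum>j<i. restr ?v (Ps ! j))"
    "(\<Union>j<i. ?Qs ! j) = (\<Union>j<i. Ps ! j)" if "i \<le> ?n" for i
    using that by (auto intro!: sum.cong simp: nth_append)
  have "Ps ! i \<inter> \<Lambda> = {}" if "i < ?n" for i
    using \<Lambda>(2) nth_mem[OF that] by blast
  then have "?Qs ! i \<inter> ?Qs ! j = {}" if "i < Suc ?n" "j < Suc ?n" "i \<noteq> j" for i j
    using Ps that unfolding optimal_partial_decomposition_def
    by (auto simp: nth_append less_Suc_eq) blast+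
  moreover have "group_sparse G k (?Qs ! i) \<and> ?Qs ! i \<subseteq> - L0" if "i < Suc ?n" for i
    using Ps \<Lambda> that unfolding optimal_partial_decomposition_def
    by (auto simp: nth_append less_Suc_eq)
  moreover have "NA (\<rho> - restr \<rho> (?Qs ! i)) \<le> NA (\<rho> - restr \<rho> L)"
    if "i < Suc ?n" "group_sparse G k L" "L \<subseteq> - (L0 \<union> (\<Union>j<i. ?Qs ! j))"
      and "\<rho> = ?v - (\<Sum>j<i. restr ?v (?Qs ! j))" for i L \<rho>
  proof (cases "i < ?n")
    case True
    then show ?thesis
      using Ps that prefix[of i] unfolding optimal_partial_decomposition_def Let_def
      by (auto simp: nth_append)
  next
    case False
    then have i: "i = ?n"
      using that(1) by simp
    then have "L \<subseteq> - (L0 \<union> \<Union>(set Ps))"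
      using that(3) prefix(2)[of i] by (simp only: UN_lessThan_nth order_refl)
    moreover have "\<rho> = r" "?Qs ! i = \<Lambda>"
      using i that(4) prefix(1)[of i] r by simp_all
    ultimately show ?thesis
      using best that(2) by simp
  qed
  ultimately show ?thesis
    unfolding optimal_partial_decomposition_def Let_def by auto
qed

lemma exists_best_group_sparse_subset:
  assumes part: "partition_on UNIV G" and gsize: "\<forall>g\<in>G. card g \<le> k"
    and normA: "is_norm NA" and decA: "decomposable G NA"
    and R: "group_union G R" "R \<noteq> {}"
  shows "\<exists>\<Lambda>. \<Lambda> \<noteq> {} \<and> group_sparse G k \<Lambda> \<and> \<Lambda> \<subseteq> R \<and>
    (\<forall>L. group_sparse G k L \<and> L \<subseteq> R \<longrightarrow> NA (r - restr r \<Lambda>) \<le> NA (r - restr r L))"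
proof -
  define C where "C = {L. group_sparse G k L \<and> L \<subseteq> R}"
  have "finite C" "{} \<in> C"
    by (auto simp: C_def group_sparse_def)
  then obtain \<Lambda>0 where \<Lambda>0: "\<Lambda>0 \<in> C" "\<And>L. L \<in> C \<Longrightarrow> NA (r - restr r \<Lambda>0) \<le> NA (r - restr r L)"
    using ex_is_arg_min_if_finite[of C "\<lambda>L. NA (r - restr r L)"]
    by (auto simp: is_arg_min_linorder)
  obtain g i where g: "g \<in> G" "i \<in> g" "g \<subseteq> R"
    using R unfolding group_union_def by blast
  have "group_union G g"
    using g(1) unfolding group_union_def by (intro exI[of _ "{g}"]) auto
  \<comment> \<open>a minimiser may be empty; a single group does at least as well as the empty set\<close>
  then have "NA (restr r (- g)) + 1 * NA (restr r g) \<le> NA (restr r (- g) + restr r g)"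
    by (intro gamma_decomposableD[OF part decA[unfolded decomposable_def]
          group_union_Compl[OF part] _ _ supp_restr supp_restr]) auto
  then have "NA (r - restr r g) \<le> NA (r - restr r {})"
    using is_normD(1)[OF normA, of "restr r g"] restr_add_restr_compl[of r g]
    by (simp add: restr_compl add.commute)
  then have g_best: "NA (r - restr r g) \<le> NA (r - restr r L)" if "\<Lambda>0 = {}" "L \<in> C" for L
    using \<Lambda>0(2)[OF that(2)] that(1) by simp
  have "g \<in> C"
    using g group_sparse_group[OF gsize g(1)] by (simp add: C_def)
  show ?thesis
  proof (cases "\<Lambda>0 = {}")
    case True
    then show ?thesis
      using g_best \<open>g \<in> C\<close> g(2) unfolding C_def by blast
  next
    case False
    then show ?thesis
      using \<Lambda>0 unfolding C_def by blast
  qed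
qed

lemma optimal_decomposition_exists:
  assumes part: "partition_on UNIV G" and gsize: "\<forall>g\<in>G. card g \<le> k"
    and normA: "is_norm NA" and decA: "decomposable G NA" and L0: "group_union G L0"
  obtains Ls where "optimal_decomposition G k NA h L0 Ls" "Ls \<noteq> []"
proof -
  have "\<exists>Ls. optimal_decomposition G k NA h L0 Ls"
    if "optimal_partial_decomposition G k NA h L0 Ps" "card (- (L0 \<union> \<Union>(set Ps))) = m" for m Ps
    using that
  proof (induction m arbitrary: Ps rule: less_induct)
    case (less m Ps)
    let ?R = "- (L0 \<union> \<Union>(set Ps))"
    have Ps: "group_sparse G k P" "P \<subseteq> - L0" if "P \<in> set Ps" for P
      using optimal_partial_decomposition_sparse[OF less.prems(1) that] by simp_all
    show ?case
    proof (cases "?R = {}")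
      case True
      then have "\<Union>(set Ps) = - L0"
        using Ps(2) by blast
      then show ?thesis
        using less.prems(1) optimal_decomposition_iff by blast
    next
      case False
      have "group_union G (\<Union>(set Ps))"
        using group_union_UN[of "set Ps" G id] Ps(1) group_sparse_imp_group_union by force
      then have "group_union G ?R"
        by (intro group_union_Compl[OF part] group_union_Un[OF L0])
      define r where "r = restr h (- L0) - (\<Sum>j<length Ps. restr (restr h (- L0)) (Ps ! j))"
      obtain \<Lambda> where \<Lambda>: "\<Lambda> \<noteq> {}" "group_sparse G k \<Lambda>" "\<Lambda> \<subseteq> ?R"
        "\<forall>L. group_sparse G k L \<and> L \<subseteq> ?R \<longrightarrow> NA (r - restr r \<Lambda>) \<le> NA (r - restr r L)"
        using exists_best_group_sparse_subset[OF part gsize normA decA \<open>group_union G ?R\<close> False,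
            where r = r] by blast
      have "optimal_partial_decomposition G k NA h L0 (Ps @ [\<Lambda>])"
        using \<Lambda>(4) by (intro optimal_partial_decomposition_snoc[OF less.prems(1) \<Lambda>(2,3) r_def]) blast
      moreover have "card (- (L0 \<union> \<Union>(set (Ps @ [\<Lambda>])))) < m"
      proof -
        obtain y where "y \<in> \<Lambda>"
          using \<Lambda>(1) by blast
        with \<Lambda>(3) have "- (L0 \<union> \<Union>(set (Ps @ [\<Lambda>]))) \<subset> ?R"
          by (auto simp: psubset_eq) blast
        then show ?thesis
          using less.prems(2) psubset_card_mono[OF finite] by metis
      qed
      ultimately show ?thesis
        using less.IH[OF _ _ refl] by blast
    qed
  qed
  from this[OF optimal_partial_decomposition_Nil refl]
  obtain Ls where Ls: "optimal_decomposition G k NA h L0 Ls" ..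
  show ?thesis
  proof (cases "Ls = []")
    case True
    \<comment> \<open>then L0 covers everything and the one-block decomposition [{}] is optimal\<close>
    then have "- L0 = {}"
      using Ls by (simp add: optimal_decomposition_iff)
    then have "optimal_decomposition G k NA h L0 [{}]"
      by (simp add: optimal_decomposition_iff optimal_partial_decomposition_def)
    then show ?thesis
      using that by blast
  next
    case False
    then show ?thesis
      using Ls that by blast
  qed
qed

section \<open>Estimates for a split of the index set\<close>

lemma norm_polarization: "(norm (a + b))\<^sup>2 - (norm (a - b))\<^sup>2 = 4 * (a \<bullet> (b :: 'a :: real_inner))"
  by (simp add: power2_norm_eq_inner inner_add_left inner_add_right inner_diff_left
      inner_diff_right inner_commute algebra_simps)

lemma GRIP_inner_le:
  assumes grip: "GRIP G t A \<delta>" and L: "group_sparse G t L"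
    and supp: "supp u \<subseteq> P" "supp v \<subseteq> Q" and PQ: "P \<inter> Q = {}" "P \<union> Q \<subseteq> L"
  shows "\<bar>(A *v u) \<bullet> (A *v v)\<bar> \<le> \<delta> * norm u * norm v"
proof (cases "u = 0 \<or> v = 0")
  case False
  then have nu: "norm u > 0" and nv: "norm v > 0"
    by auto
  define u' where "u' = (1 / norm u) *\<^sub>R u"
  define v' where "v' = (1 / norm v) *\<^sub>R v"
  have supp': "supp u' \<subseteq> P" "supp v' \<subseteq> Q"
    using supp supp_scaleR unfolding u'_def v'_def by blast+
  have "norm u' = 1" "norm v' = 1"
    using nu nv by (simp_all add: u'_def v'_def)
  then have sq: "(norm (u' + v'))\<^sup>2 = 2" "(norm (u' - v'))\<^sup>2 = 2"
    using norm_add_disjoint_supp[OF PQ(1) supp'(1), of "- v'"] norm_add_disjoint_supp[OF PQ(1) supp']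
      supp'(2) by simp_all
  have "supp (u' + v') \<subseteq> L" "supp (u' - v') \<subseteq> L"
    using supp_add[of u' v'] supp_add[of u' "- v'"] supp' PQ(2) by auto blast+
  moreover have grip_L: "(1 - \<delta>) * (norm z)\<^sup>2 \<le> (norm (A *v z))\<^sup>2 \<and> (norm (A *v z))\<^sup>2 \<le> (1 + \<delta>) * (norm z)\<^sup>2"
    if "supp z \<subseteq> L" for z
    using grip L that unfolding GRIP_def by blast
  \<comment> \<open>the GRIP bounds on the unit vectors u' \<plusminus> v' pin down their inner product via polarization\<close>
  ultimately have "(1 - \<delta>) * 2 \<le> (norm (A *v (u' + v')))\<^sup>2 \<and> (norm (A *v (u' + v')))\<^sup>2 \<le> (1 + \<delta>) * 2"
    "(1 - \<delta>) * 2 \<le> (norm (A *v (u' - v')))\<^sup>2 \<and> (norm (A *v (u' - v')))\<^sup>2 \<le> (1 + \<delta>) * 2"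
    using sq by (metis grip_L)+
  then have "\<bar>(A *v u') \<bullet> (A *v v')\<bar> \<le> \<delta>"
    using norm_polarization[of "A *v u'" "A *v v'"]
    by (simp add: matrix_vector_right_distrib matrix_vector_mult_diff_distrib) linarith
  moreover have "(A *v u) \<bullet> (A *v v) = norm u * norm v * ((A *v u') \<bullet> (A *v v'))"
    using nu nv by (simp add: u'_def v'_def matrix_vector_mult_scaleR)
  ultimately show ?thesis
    using nu nv by (simp add: abs_mult mult.assoc mult_left_mono mult.commute mult.left_commute)
qed auto

lemma add_le_sqrt2_sqrt_sum_sq: "a + b \<le> sqrt 2 * sqrt (a\<^sup>2 + b\<^sup>2)" for a b :: real
proof -
  have "(a + b)\<^sup>2 \<le> 2 * (a\<^sup>2 + b\<^sup>2)"
    using zero_le_power2[of "a - b"] by (simp add: power2_eq_square algebra_simps)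
  then show ?thesis
    by (metis real_le_rsqrt real_sqrt_mult)
qed

locale sparse_split =
  fixes G :: "'n::finite set set" and k :: nat and L0 :: "'n set" and s :: nat
    and Lam :: "nat \<Rightarrow> 'n set"
  assumes partition: "partition_on UNIV G"
    and L0_sparse: "group_sparse G k L0"
    and Lam_sparse: "j < s \<Longrightarrow> group_sparse G k (Lam j)"
    and Lam_disjoint_L0: "j < s \<Longrightarrow> Lam j \<inter> L0 = {}"
    and Lam_disjoint: "i < s \<Longrightarrow> j < s \<Longrightarrow> i \<noteq> j \<Longrightarrow> Lam i \<inter> Lam j = {}"
    and Lam_cover: "(\<Union>j<s. Lam j) = - L0"
    and s_pos: "0 < s"
begin

lemma restr_Compl_L0: "restr w (- L0) = (\<Sum>j<s. restr w (Lam j))"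
  using sum_restr_disjoint[of "{..<s}" Lam w] Lam_disjoint Lam_cover by simp

lemma gamma_decomposable_split:
  assumes "gamma_decomposable G \<gamma> N"
  shows "N (restr w L0) + \<gamma> * (\<Sum>j<s. N (restr w (Lam j))) \<le> N w"
proof -
  have "N (restr w L0) + \<gamma> * (\<Sum>j<s. N (restr w (Lam j))) \<le> N (restr w L0 + (\<Sum>j<s. restr w (Lam j)))"
    using Lam_sparse Lam_disjoint_L0 Lam_disjoint
    by (intro gamma_decomposable_sum[OF partition assms, of "{..<s}" L0 _ Lam])
      (auto intro: group_sparse_imp_group_union L0_sparse simp: supp_def)
  then show ?thesis
    by (simp add: restr_Compl_L0[symmetric] restr_add_restr_compl)
qed

lemma decomposable_sum_eq:
  assumes "is_norm N" "decomposable G N"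
  shows "(\<Sum>j<s. N (restr w (Lam j))) = N (restr w (- L0))"
proof (rule antisym)
  have "Lam j \<subseteq> - L0" if "j < s" for j
    using Lam_disjoint_L0[OF that] by blast
  then have "restr (restr w (- L0)) (Lam j) = restr w (Lam j)" if "j < s" for j
    using that by (simp add: Int_absorb1)
  then show "(\<Sum>j<s. N (restr w (Lam j))) \<le> N (restr w (- L0))"
    using gamma_decomposable_split[OF assms(2)[unfolded decomposable_def], of "restr w (- L0)"]
    by (simp add: is_norm_zero[OF assms(1)])
  show "N (restr w (- L0)) \<le> (\<Sum>j<s. N (restr w (Lam j)))"
    unfolding restr_Compl_L0 by (rule is_norm_sum_le[OF assms(1)])
qed

lemma cone_constraint:
  assumes normA: "is_norm NA" and normP: "is_norm NP"
    and decA: "decomposable G NA" and decP: "gamma_decomposable G \<gamma> NP" and "0 < \<gamma>" "0 < a"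
    and lower: "\<And>v L. group_sparse G k L \<Longrightarrow> supp v \<subseteq> L \<Longrightarrow> a * NA v \<le> NP v"
    and upper: "\<And>v L. group_sparse G k L \<Longrightarrow> supp v \<subseteq> L \<Longrightarrow> NP v \<le> b * NA v"
    and min: "NP (x + h) \<le> NP x"
  shows "NA (restr h (- L0)) \<le> b / (a * \<gamma>) * NA (restr h L0) + b / (a * \<gamma>) * (1 + \<gamma>) * NA (restr x (- L0))"
proof -
  let ?\<sigma> = "NA (restr x (- L0))"
  have head: "NP (restr x L0) - b * NA (restr h L0) \<le> NP (restr (x + h) L0)"
    using is_norm_diff_le[OF normP, of "restr x L0" "restr h L0"] upper[OF L0_sparse supp_restr, of h]
    by (simp add: restr_add)
  have block: "a * NA (restr h (Lam j)) - b * NA (restr x (Lam j)) \<le> NP (restr (x + h) (Lam j))"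
    if "j < s" for j
    using is_norm_diff_le[OF normP, of "restr h (Lam j)" "restr x (Lam j)"]
      lower[OF Lam_sparse[OF that] supp_restr, of h] upper[OF Lam_sparse[OF that] supp_restr, of x]
    by (simp add: restr_add add.commute)
  have "a * NA (restr h (- L0)) - b * ?\<sigma> = (\<Sum>j<s. a * NA (restr h (Lam j)) - b * NA (restr x (Lam j)))"
    by (simp add: decomposable_sum_eq[OF normA decA] sum_subtractf sum_distrib_left[symmetric])
  also have "\<dots> \<le> (\<Sum>j<s. NP (restr (x + h) (Lam j)))"
    by (rule sum_mono) (simp add: block)
  finally have "NP (restr x L0) - b * NA (restr h L0) + \<gamma> * (a * NA (restr h (- L0)) - b * ?\<sigma>) \<le> NP (x + h)"
    using head gamma_decomposable_split[OF decP, of "x + h"] mult_left_mono[OF _ less_imp_le[OF \<open>0 < \<gamma>\<close>]] by force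
  moreover have "NP x \<le> NP (restr x L0) + b * ?\<sigma>"
  proof -
    have "NP x \<le> NP (restr x L0) + NP (restr x (- L0))"
      using is_normD(4)[OF normP, of "restr x L0" "restr x (- L0)"] by (simp add: restr_add_restr_compl)
    also have "NP (restr x (- L0)) \<le> (\<Sum>j<s. NP (restr x (Lam j)))"
      unfolding restr_Compl_L0 by (rule is_norm_sum_le[OF normP])
    also have "\<dots> \<le> (\<Sum>j<s. b * NA (restr x (Lam j)))"
      by (intro sum_mono upper[OF Lam_sparse supp_restr]) simp
    also have "\<dots> = b * ?\<sigma>"
      by (simp add: sum_distrib_left[symmetric] decomposable_sum_eq[OF normA decA])
    finally show ?thesis
      by simp
  qed
  ultimately have "a * \<gamma> * NA (restr h (- L0)) \<le> b * NA (restr h L0) + b * (1 + \<gamma>) * ?\<sigma>"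
    using min by (simp add: algebra_simps)
  then show ?thesis
    using \<open>0 < a\<close> \<open>0 < \<gamma>\<close> by (simp add: field_simps)
qed

lemma restr_head_tail: "restr w (L0 \<union> Lam 0) + (\<Sum>j\<in>{1..<s}. restr w (Lam j)) = w"
proof -
  have "L0 \<inter> Lam 0 = {}"
    using Lam_disjoint_L0[OF s_pos] by blast
  moreover have "(\<Sum>j<s. restr w (Lam j)) = restr w (Lam 0) + (\<Sum>j\<in>{1..<s}. restr w (Lam j))"
    using sum.atLeast_Suc_lessThan[OF s_pos, of "\<lambda>j. restr w (Lam j)"] by (simp add: atLeast0LessThan)
  ultimately show ?thesis
    using restr_add_restr_compl[of w L0] restr_Compl_L0[of w] by (simp add: restr_Un_disjoint add.assoc)
qed

lemma norm_le_head_tail: "norm w \<le> norm (restr w (L0 \<union> Lam 0)) + (\<Sum>j\<in>{1..<s}. norm (restr w (Lam j)))"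
proof -
  have "norm w \<le> norm (restr w (L0 \<union> Lam 0)) + norm (\<Sum>j\<in>{1..<s}. restr w (Lam j))"
    by (subst (1) restr_head_tail[symmetric]) (rule norm_triangle_ineq)
  then show ?thesis
    using norm_sum[of "\<lambda>j. restr w (Lam j)" "{1..<s}"] by linarith
qed

lemma restr_L0_le_head:
  assumes "\<And>v L. group_sparse G k L \<Longrightarrow> supp v \<subseteq> L \<Longrightarrow> N v \<le> d * norm v" "0 \<le> d"
  shows "N (restr w L0) \<le> d * norm (restr w (L0 \<union> Lam 0))"
proof -
  have "norm (restr w L0) \<le> norm (restr w (L0 \<union> Lam 0))"
    using norm_restr_le[of "restr w (L0 \<union> Lam 0)" L0] by (simp add: Int_absorb2)
  then show ?thesis
    using assms(1)[OF L0_sparse supp_restr] mult_left_mono[OF _ assms(2)] by (meson order_trans)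
qed

lemma norm_L0_add_norm_Lam0_le:
  "norm (restr w L0) + norm (restr w (Lam 0)) \<le> sqrt 2 * norm (restr w (L0 \<union> Lam 0))"
proof -
  have "L0 \<inter> Lam 0 = {}"
    using Lam_disjoint_L0[OF s_pos] by blast
  then have "(norm (restr w (L0 \<union> Lam 0)))\<^sup>2 = (norm (restr w L0))\<^sup>2 + (norm (restr w (Lam 0)))\<^sup>2"
    using norm_add_disjoint_supp[OF _ supp_restr supp_restr] by (simp add: restr_Un_disjoint)
  then show ?thesis
    using add_le_sqrt2_sqrt_sum_sq by (metis norm_ge_zero real_sqrt_unique)
qed

lemma GRIP_cross_le:
  assumes grip: "GRIP G (2 * k) A \<delta>" and "0 \<le> \<delta>" and j: "j \<in> {1..<s}"
  shows "- ((A *v restr h (L0 \<union> Lam 0)) \<bullet> (A *v restr h (Lam j)))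
           \<le> sqrt 2 * \<delta> * norm (restr h (L0 \<union> Lam 0)) * norm (restr h (Lam j))"
proof -
  have "j < s" "Lam j \<inter> L0 = {}" "Lam 0 \<inter> Lam j = {}" "L0 \<inter> Lam 0 = {}"
    using j Lam_disjoint_L0 Lam_disjoint[OF s_pos, of j] s_pos by auto
  have "\<bar>(A *v restr h L0) \<bullet> (A *v restr h (Lam j))\<bar> \<le> \<delta> * norm (restr h L0) * norm (restr h (Lam j))"
    using \<open>Lam j \<inter> L0 = {}\<close> by (intro GRIP_inner_le[OF grip group_sparse_Un[OF L0_sparse Lam_sparse[OF \<open>j < s\<close>]]
        supp_restr supp_restr]) auto
  moreover have "\<bar>(A *v restr h (Lam 0)) \<bullet> (A *v restr h (Lam j))\<bar>
      \<le> \<delta> * norm (restr h (Lam 0)) * norm (restr h (Lam j))"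
    using \<open>Lam 0 \<inter> Lam j = {}\<close> by (intro GRIP_inner_le[OF grip
        group_sparse_Un[OF Lam_sparse[OF s_pos] Lam_sparse[OF \<open>j < s\<close>]] supp_restr supp_restr]) auto
  moreover have "restr h (L0 \<union> Lam 0) = restr h L0 + restr h (Lam 0)"
    using \<open>L0 \<inter> Lam 0 = {}\<close> by (rule restr_Un_disjoint)
  ultimately have "- ((A *v restr h (L0 \<union> Lam 0)) \<bullet> (A *v restr h (Lam j)))
      \<le> \<delta> * (norm (restr h L0) + norm (restr h (Lam 0))) * norm (restr h (Lam j))"
    by (simp add: matrix_vector_right_distrib inner_add_left algebra_simps)
  also have "\<dots> \<le> \<delta> * (sqrt 2 * norm (restr h (L0 \<union> Lam 0))) * norm (restr h (Lam j))"
    using norm_L0_add_norm_Lam0_le \<open>0 \<le> \<delta>\<close> by (intro mult_right_mono mult_left_mono) auto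
  finally show ?thesis
    by (simp add: mult_ac)
qed

lemma GRIP_head_bound:
  assumes grip: "GRIP G (2 * k) A \<delta>" and "0 \<le> \<delta>"
  shows "(1 - \<delta>) * norm (restr h (L0 \<union> Lam 0))
           \<le> sqrt (1 + \<delta>) * norm (A *v h) + sqrt 2 * \<delta> * (\<Sum>j\<in>{1..<s}. norm (restr h (Lam j)))"
proof -
  define hT where "hT = restr h (L0 \<union> Lam 0)"
  let ?tail = "\<Sum>j\<in>{1..<s}. norm (restr h (Lam j))"
  have "group_sparse G (2 * k) (L0 \<union> Lam 0)"
    by (rule group_sparse_Un[OF L0_sparse Lam_sparse[OF s_pos]])
  then have grip_T: "(1 - \<delta>) * (norm hT)\<^sup>2 \<le> (norm (A *v hT))\<^sup>2" "(norm (A *v hT))\<^sup>2 \<le> (1 + \<delta>) * (norm hT)\<^sup>2"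
    using grip supp_restr unfolding GRIP_def hT_def by blast+
  have "A *v h = A *v hT + (\<Sum>j\<in>{1..<s}. A *v restr h (Lam j))"
    using arg_cong[OF restr_head_tail[of h], of "\<lambda>v. A *v v"]
    by (simp add: hT_def matrix_vector_right_distrib vec.sum)
  then have "(norm (A *v hT))\<^sup>2 = (A *v hT) \<bullet> (A *v h) + (\<Sum>j\<in>{1..<s}. - ((A *v hT) \<bullet> (A *v restr h (Lam j))))"
    by (simp add: power2_norm_eq_inner inner_add_right inner_sum_right sum_negf)
  also have "\<dots> \<le> norm (A *v hT) * norm (A *v h) + (\<Sum>j\<in>{1..<s}. sqrt 2 * \<delta> * norm hT * norm (restr h (Lam j)))"
    unfolding hT_def by (intro add_mono norm_cauchy_schwarz sum_mono GRIP_cross_le[OF grip \<open>0 \<le> \<delta>\<close>])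
  also have "\<dots> \<le> norm hT * (sqrt (1 + \<delta>) * norm (A *v h) + sqrt 2 * \<delta> * ?tail)"
  proof -
    have AhT: "norm (A *v hT) \<le> sqrt (1 + \<delta>) * norm hT"
      using real_le_rsqrt[OF grip_T(2)] by (simp add: real_sqrt_mult)
    show ?thesis
      using mult_right_mono[OF AhT norm_ge_zero[of "A *v h"]] by (simp add: sum_distrib_left algebra_simps)
  qed
  finally have "norm hT * ((1 - \<delta>) * norm hT) \<le> norm hT * (sqrt (1 + \<delta>) * norm (A *v h) + sqrt 2 * \<delta> * ?tail)"
    using grip_T(1) by (simp add: power2_eq_square algebra_simps)
  moreover have "0 \<le> sqrt (1 + \<delta>) * norm (A *v h) + sqrt 2 * \<delta> * ?tail"
    using \<open>0 \<le> \<delta>\<close> by (simp add: sum_nonneg)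
  ultimately show ?thesis
    unfolding hT_def[symmetric] by (cases "norm hT = 0") (auto simp: mult_le_cancel_left_pos)
qed

end

section \<open>The recovery bound\<close>

lemma compressibility_imp_pos:
  fixes f r d \<delta> :: real
  assumes "0 < f" "0 \<le> r" "0 \<le> d" "\<delta> < f / (f + sqrt 2 * r * d)"
  shows "0 < 1 - (1 + sqrt 2 * r * d / f) * \<delta>"
proof -
  have "0 < f + sqrt 2 * r * d"
    using assms(1-3) by (simp add: add_pos_nonneg)
  then have "\<delta> * (f + sqrt 2 * r * d) < f"
    using assms(4) by (simp add: pos_less_divide_eq)
  then show ?thesis
    using assms(1) by (simp add: field_simps)
qed

lemma recovery_constants_eq:
  fixes f r d \<gamma> \<delta> \<sigma> \<epsilon> :: real
  defines "\<Delta> \<equiv> 1 - (1 + sqrt 2 * r * d / f) * \<delta>"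
    and "E \<equiv> 2 * \<epsilon> * sqrt (1 + \<delta>) + sqrt 2 * \<delta> * r * (1 + \<gamma>) * \<sigma> / f"
  assumes "0 < f" "0 < \<Delta>"
  shows "(1 + r * d / f) * (E / \<Delta>) + r * (1 + \<gamma>) * \<sigma> / f
           = r * (1 + \<gamma>) / f * ((1 + (sqrt 2 - 1) * \<delta>) / \<Delta>) * \<sigma>
             + 2 * (1 + r * d / f) * (sqrt (1 + \<delta>) / \<Delta>) * \<epsilon>"
    and "(1 + r) * d * (E / \<Delta>) + r * (1 + \<gamma>) * \<sigma>
           = r * (1 + \<gamma>) * ((1 + (sqrt 2 * d / f - 1) * \<delta>) / \<Delta>) * \<sigma>
             + 2 * d * (1 + r) * (sqrt (1 + \<delta>) / \<Delta>) * \<epsilon>"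
proof -
  \<comment> \<open>clearing the denominator f of \<Delta> lets field_simps see that it does not vanish\<close>
  define P where "P = f - f * \<delta> - sqrt 2 * r * d * \<delta>"
  have \<Delta>_P: "\<Delta> = P / f" and "0 < P"
    using assms(3,4) unfolding \<Delta>_def P_def by (simp_all add: field_simps)
  show "(1 + r * d / f) * (E / \<Delta>) + r * (1 + \<gamma>) * \<sigma> / f
           = r * (1 + \<gamma>) / f * ((1 + (sqrt 2 - 1) * \<delta>) / \<Delta>) * \<sigma>
             + 2 * (1 + r * d / f) * (sqrt (1 + \<delta>) / \<Delta>) * \<epsilon>"
    using assms(3) \<open>0 < P\<close> unfolding E_def \<Delta>_P
    by (simp add: field_simps) (simp add: P_def algebra_simps)
  show "(1 + r) * d * (E / \<Delta>) + r * (1 + \<gamma>) * \<sigma>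
           = r * (1 + \<gamma>) * ((1 + (sqrt 2 * d / f - 1) * \<delta>) / \<Delta>) * \<sigma>
             + 2 * d * (1 + r) * (sqrt (1 + \<delta>) / \<Delta>) * \<epsilon>"
    using assms(3) \<open>0 < P\<close> unfolding E_def \<Delta>_P
    by (simp add: field_simps) (simp add: P_def algebra_simps)
qed

lemma recovery_bounds_arith:
  fixes f r d \<gamma> \<delta> \<sigma> \<epsilon> e t \<tau> c0 c e1 e2 :: real
  defines "\<Delta> \<equiv> 1 - (1 + sqrt 2 * r * d / f) * \<delta>"
  assumes "0 < f" "0 \<le> r" "0 \<le> d" "0 \<le> \<delta>" and compress: "\<delta> < f / (f + sqrt 2 * r * d)"
    and head: "(1 - \<delta>) * t \<le> sqrt (1 + \<delta>) * e + sqrt 2 * \<delta> * \<tau>" and noise: "e \<le> 2 * \<epsilon>"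
    and tail: "\<tau> \<le> (1 / f) * c"
    and cone: "c \<le> r * c0 + r * (1 + \<gamma>) * \<sigma>"
    and c0: "c0 \<le> d * t"
    and e1: "e1 \<le> t + \<tau>"
    and e2: "e2 \<le> c0 + c"
  shows "e1 \<le> r * (1 + \<gamma>) / f * ((1 + (sqrt 2 - 1) * \<delta>) / \<Delta>) * \<sigma>
              + 2 * (1 + r * d / f) * (sqrt (1 + \<delta>) / \<Delta>) * \<epsilon>"
    and "e2 \<le> r * (1 + \<gamma>) * ((1 + (sqrt 2 * d / f - 1) * \<delta>) / \<Delta>) * \<sigma>
              + 2 * d * (1 + r) * (sqrt (1 + \<delta>) / \<Delta>) * \<epsilon>"
proof -
  have "0 < \<Delta>"
    unfolding \<Delta>_def by (rule compressibility_imp_pos) fact+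
  define E where "E = 2 * \<epsilon> * sqrt (1 + \<delta>) + sqrt 2 * \<delta> * r * (1 + \<gamma>) * \<sigma> / f"
  have c_t: "c \<le> r * d * t + r * (1 + \<gamma>) * \<sigma>"
    using cone mult_left_mono[OF c0 \<open>0 \<le> r\<close>] by (simp add: mult.assoc)
  then have \<tau>_t: "\<tau> \<le> (r * d * t + r * (1 + \<gamma>) * \<sigma>) / f"
    using tail divide_right_mono[of c _ f] \<open>0 < f\<close> by fastforce
  have "\<Delta> * t \<le> E"
  proof -
    have "sqrt (1 + \<delta>) * e \<le> 2 * \<epsilon> * sqrt (1 + \<delta>)"
      using mult_left_mono[OF noise, of "sqrt (1 + \<delta>)"] \<open>0 \<le> \<delta>\<close> by (simp add: mult_ac)
    moreover have "sqrt 2 * \<delta> * \<tau> \<le> sqrt 2 * \<delta> * (r * d * t / f) + sqrt 2 * \<delta> * r * (1 + \<gamma>) * \<sigma> / f"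
      using mult_left_mono[OF \<tau>_t, of "sqrt 2 * \<delta>"] \<open>0 \<le> \<delta>\<close> by (simp add: add_divide_distrib algebra_simps)
    moreover have "\<Delta> * t = (1 - \<delta>) * t - sqrt 2 * \<delta> * (r * d * t / f)"
      unfolding \<Delta>_def by (simp add: algebra_simps)
    ultimately show ?thesis
      using head unfolding E_def by linarith
  qed
  then have t: "t \<le> E / \<Delta>"
    using \<open>0 < \<Delta>\<close> by (simp add: pos_le_divide_eq mult.commute)
  have "e1 \<le> t + (r * d * t + r * (1 + \<gamma>) * \<sigma>) / f"
    using e1 \<tau>_t by linarith
  also have "\<dots> = (1 + r * d / f) * t + r * (1 + \<gamma>) * \<sigma> / f"
    by (simp add: add_divide_distrib algebra_simps)
  also have "\<dots> \<le> (1 + r * d / f) * (E / \<Delta>) + r * (1 + \<gamma>) * \<sigma> / f"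
    using mult_left_mono[OF t, of "1 + r * d / f"] \<open>0 < f\<close> \<open>0 \<le> r\<close> \<open>0 \<le> d\<close> by simp
  also have "\<dots> = r * (1 + \<gamma>) / f * ((1 + (sqrt 2 - 1) * \<delta>) / \<Delta>) * \<sigma>
              + 2 * (1 + r * d / f) * (sqrt (1 + \<delta>) / \<Delta>) * \<epsilon>"
    unfolding E_def \<Delta>_def by (rule recovery_constants_eq(1)[OF \<open>0 < f\<close> \<open>0 < \<Delta>\<close>[unfolded \<Delta>_def]])
  finally show "e1 \<le> r * (1 + \<gamma>) / f * ((1 + (sqrt 2 - 1) * \<delta>) / \<Delta>) * \<sigma>
              + 2 * (1 + r * d / f) * (sqrt (1 + \<delta>) / \<Delta>) * \<epsilon>" .
  have "e2 \<le> (1 + r) * d * t + r * (1 + \<gamma>) * \<sigma>"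
    using e2 c0 c_t by (simp add: algebra_simps)
  also have "\<dots> \<le> (1 + r) * d * (E / \<Delta>) + r * (1 + \<gamma>) * \<sigma>"
    using mult_left_mono[OF t, of "(1 + r) * d"] \<open>0 \<le> r\<close> \<open>0 \<le> d\<close> by simp
  also have "\<dots> = r * (1 + \<gamma>) * ((1 + (sqrt 2 * d / f - 1) * \<delta>) / \<Delta>) * \<sigma>
              + 2 * d * (1 + r) * (sqrt (1 + \<delta>) / \<Delta>) * \<epsilon>"
    unfolding E_def \<Delta>_def by (rule recovery_constants_eq(2)[OF \<open>0 < f\<close> \<open>0 < \<Delta>\<close>[unfolded \<Delta>_def]])
  finally show "e2 \<le> r * (1 + \<gamma>) * ((1 + (sqrt 2 * d / f - 1) * \<delta>) / \<Delta>) * \<sigma>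
              + 2 * d * (1 + r) * (sqrt (1 + \<delta>) / \<Delta>) * \<epsilon>" .
qed

lemma sparsity_index_attained:
  obtains L where "group_sparse G k L" "sparsity_index G k x N = N (restr x (- L))"
proof -
  have "finite {L. group_sparse G k L}" "{} \<in> {L. group_sparse G k L}"
    by simp_all
  then have "sparsity_index G k x N \<in> (\<lambda>L. N (x - restr x L)) ` {L. group_sparse G k L}"
    unfolding sparsity_index_def by (intro Min_in finite_imageI) blast+
  then show ?thesis
    using that by (auto simp: restr_compl)
qed

lemma optimal_decomposition_sparse_split:
  assumes "partition_on UNIV G" "group_sparse G k L0"
    and "optimal_decomposition G k NA h L0 Ls" "Ls \<noteq> []"
  shows "sparse_split G k L0 (length Ls) ((!) Ls)"
proof -
  note opt = assms(3)[unfolded optimal_decomposition_def Let_def]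
  have "\<forall>i<length Ls. group_sparse G k (Ls ! i) \<and> Ls ! i \<subseteq> - L0"
    "\<forall>i<length Ls. \<forall>j<length Ls. i \<noteq> j \<longrightarrow> Ls ! i \<inter> Ls ! j = {}" "\<Union>(set Ls) = - L0"
    using opt[THEN conjunct1] opt[THEN conjunct2, THEN conjunct1]
      opt[THEN conjunct2, THEN conjunct2, THEN conjunct1] by simp_all
  then show ?thesis
    using assms(1,2,4) UN_lessThan_nth[of Ls] by unfold_locales auto
qed

theorem theorem4p1:
  fixes G :: "'n::finite set set" and k :: nat
    and NA NP :: "real^'n \<Rightarrow> real" and \<gamma> f \<delta> \<epsilon> :: real
    and A :: "real^'n^'m::finite" and x xhat :: "real^'n" and \<eta> :: "real^'m"
  assumes part: "partition_on UNIV G" and gsize: "\<forall>g\<in>G. card g \<le> k"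
    and k_pos: "k > 0"
    and normA: "is_norm NA" and normP: "is_norm NP"
    and decA: "decomposable G NA"
    and \<gamma>: "0 < \<gamma>" "\<gamma> \<le> 1" and decP: "gamma_decomposable G \<gamma> NP"
    and f_pos: "f > 0"
    and f_prop: "\<forall>h L0 Ls. group_sparse G k L0 \<and> optimal_decomposition G k NA h L0 Ls \<longrightarrow>
                   (\<Sum>j\<in>{1..<length Ls}. norm (restr h (Ls ! j))) \<le> (1 / f) * NA (restr h (- L0))"
    and grip: "GRIP G (2 * k) A \<delta>" and \<delta>: "0 < \<delta>" "\<delta> < 1"
    and compress: "\<delta> < f / (f + sqrt 2 * (const_b G k NA NP / (const_a G k NA NP * \<gamma>)) * const_d G k NA)"
    and noise: "norm \<eta> \<le> \<epsilon>"
    and xhat_feas: "norm ((A *v x + \<eta>) - A *v xhat) \<le> \<epsilon>"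
    and xhat_min: "\<forall>z. norm ((A *v x + \<eta>) - A *v z) \<le> \<epsilon> \<longrightarrow> NP xhat \<le> NP z"
  shows "let a = const_a G k NA NP; b = const_b G k NA NP; d = const_d G k NA;
             r = b / (a * \<gamma>); \<sigma> = sparsity_index G k x NA;
             \<Delta> = 1 - (1 + sqrt 2 * r * d / f) * \<delta>;
             D1 = r * (1 + \<gamma>) / f * ((1 + (sqrt 2 - 1) * \<delta>) / \<Delta>);
             D2 = 2 * (1 + r * d / f) * (sqrt (1 + \<delta>) / \<Delta>);
             D3 = r * (1 + \<gamma>) * ((1 + (sqrt 2 * d / f - 1) * \<delta>) / \<Delta>);
             D4 = 2 * d * (1 + r) * (sqrt (1 + \<delta>) / \<Delta>)
         in norm (xhat - x) \<le> D1 * \<sigma> + D2 * \<epsilon> \<and> NA (xhat - x) \<le> D3 * \<sigma> + D4 * \<epsilon>"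
proof -
  define h where "h = xhat - x"
  note a = Inf_ratios_pos[OF part gsize normP normA, folded const_a_def]
    Inf_ratios_le[OF part gsize normP normA, folded const_a_def]
  note b = Sup_ratios_pos[OF part gsize normP normA, folded const_b_def]
    le_Sup_ratios[OF part gsize normP normA, folded const_b_def]
  note d = Sup_ratios_pos[OF part gsize normA is_norm_norm, folded const_d_def]
    le_Sup_ratios[OF part gsize normA is_norm_norm, folded const_d_def]
  obtain L0 where L0: "group_sparse G k L0" "sparsity_index G k x NA = NA (restr x (- L0))"
    using sparsity_index_attained by blast
  obtain Ls where Ls: "optimal_decomposition G k NA h L0 Ls" "Ls \<noteq> []"
    using optimal_decomposition_exists[OF part gsize normA decA group_sparse_imp_group_union[OF L0(1)]] .
  interpret sparse_split G k L0 "length Ls" "(!) Ls"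
    by (rule optimal_decomposition_sparse_split[OF part L0(1) Ls])
  define r where "r = const_b G k NA NP / (const_a G k NA NP * \<gamma>)"
  have "NP (x + h) \<le> NP x"
    using xhat_min noise by (simp add: h_def)
  with a b have cone: "NA (restr h (- L0)) \<le> r * NA (restr h L0) + r * (1 + \<gamma>) * NA (restr x (- L0))"
    unfolding r_def by (intro cone_constraint[OF normA normP decA decP \<gamma>(1)]) auto
  have head: "NA (restr h L0) \<le> const_d G k NA * norm (restr h (L0 \<union> Ls ! 0))"
    by (rule restr_L0_le_head) (use d in auto)
  have "norm (A *v h) \<le> 2 * \<epsilon>"
    using norm_triangle_ineq4[of \<eta> "(A *v x + \<eta>) - A *v xhat"] noise xhat_feas
    by (simp add: h_def matrix_vector_mult_diff_distrib)
  moreover have "0 \<le> r"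
    using a(1) b(1) \<gamma>(1) by (simp add: r_def)
  ultimately show ?thesis
    using recovery_bounds_arith[OF f_pos _ less_imp_le[OF d(1)] less_imp_le[OF \<delta>(1)] compress[folded r_def]
        GRIP_head_bound[OF grip less_imp_le[OF \<delta>(1)], of h] _ f_prop[rule_format, OF conjI[OF L0(1) Ls(1)]]
        cone head norm_le_head_tail[of h] is_norm_le_restr_add_restr_compl[OF normA]]
    unfolding Let_def L0(2) h_def r_def[symmetric] by blast
qed

end
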